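(* Let $S=(P,L)$ be a $(2,2)$-generalized quadrangle and let $(R,\psi)$ be a faithful representation of $S$ with $\psi(x)=\langle r_x\rangle$. Then $|R|=2^4$ if and only if $r_ar_br_c=1$ for every complete $3$-arc $\{a,b,c\}$ of $S$.
   Context: A $(2,t)$-generalized quadrangle is a partial linear space in which every line has exactly $3$ points, every point lies on exactly $t+1$ lines, no point is collinear with all points, and for every point $x$ and line $\ell$ with $x\notin\ell$, $x$ is collinear with exactly one point of $\ell$. A $k$-arc is a set of $k$ pairwise non-collinear points; it is complete if it is not contained in a $(k+1)$-arc. A representation $(R,\psi)$ of $S$ is a group $R$ with a map $\psi$ assigning to each point $x$ a subgroup $\psi(x)=\langle r_x\rangle$ of order $2$, such that $R$ is generated by the $r_x$ and, for every line $\{x,y,z\}$, $\{1,r_x,r_y,r_z\}$ is a Klein four subgroup. It is faithful if $\psi$ is injective. *)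

theory Defs
  imports "HOL-Algebra.Algebra"
begin

definition collinear :: "'p set set \<Rightarrow> 'p \<Rightarrow> 'p \<Rightarrow> bool" where
  "collinear L x y \<longleftrightarrow> (\<exists>l\<in>L. x \<in> l \<and> y \<in> l)"

definition partial_linear_space :: "'p set \<Rightarrow> 'p set set \<Rightarrow> bool" where
  "partial_linear_space P L \<longleftrightarrow>
     (\<forall>l\<in>L. l \<subseteq> P \<and> card l \<ge> 2) \<and>
     (\<forall>x\<in>P. \<forall>y\<in>P. x \<noteq> y \<longrightarrow> (\<forall>l\<in>L. \<forall>m\<in>L. x \<in> l \<and> y \<in> l \<and> x \<in> m \<and> y \<in> m \<longrightarrow> l = m))"

definition GQ2 :: "nat \<Rightarrow> 'p set \<Rightarrow> 'p set set \<Rightarrow> bool" where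
  "GQ2 t P L \<longleftrightarrow>
     P \<noteq> {} \<and>
     partial_linear_space P L \<and>
     (\<forall>l\<in>L. finite l \<and> card l = 3) \<and>
     (\<forall>x\<in>P. finite {l\<in>L. x \<in> l} \<and> card {l\<in>L. x \<in> l} = t + 1) \<and>
     (\<forall>x\<in>P. \<not> (\<forall>y\<in>P. collinear L x y)) \<and>
     (\<forall>x\<in>P. \<forall>l\<in>L. x \<notin> l \<longrightarrow> (\<exists>!y. y \<in> l \<and> collinear L x y))"

definition is_arc :: "'p set \<Rightarrow> 'p set set \<Rightarrow> 'p set \<Rightarrow> bool" where
  "is_arc P L A \<longleftrightarrow> A \<subseteq> P \<and> (\<forall>x\<in>A. \<forall>y\<in>A. x \<noteq> y \<longrightarrow> \<not> collinear L x y)"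

definition is_k_arc :: "'p set \<Rightarrow> 'p set set \<Rightarrow> nat \<Rightarrow> 'p set \<Rightarrow> bool" where
  "is_k_arc P L k A \<longleftrightarrow> is_arc P L A \<and> finite A \<and> card A = k"

definition complete_k_arc :: "'p set \<Rightarrow> 'p set set \<Rightarrow> nat \<Rightarrow> 'p set \<Rightarrow> bool" where
  "complete_k_arc P L k A \<longleftrightarrow> is_k_arc P L k A \<and>
     \<not> (\<exists>B. A \<subseteq> B \<and> is_k_arc P L (k + 1) B)"

definition klein_four_subgroup :: "('a, 'b) monoid_scheme \<Rightarrow> 'a set \<Rightarrow> bool" where
  "klein_four_subgroup R H \<longleftrightarrow> subgroup H R \<and> finite H \<and> card H = 4 \<and>
     (\<forall>h\<in>H. h \<otimes>\<^bsub>R\<^esub> h = \<one>\<^bsub>R\<^esub>)"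

(* representation (R, psi) with psi x = <r x>, r x of order 2 *)
definition representation ::
  "'p set \<Rightarrow> 'p set set \<Rightarrow> ('a, 'b) monoid_scheme \<Rightarrow> ('p \<Rightarrow> 'a) \<Rightarrow> bool" where
  "representation P L R r \<longleftrightarrow> group R \<and>
     (\<forall>x\<in>P. r x \<in> carrier R \<and> r x \<noteq> \<one>\<^bsub>R\<^esub> \<and> r x \<otimes>\<^bsub>R\<^esub> r x = \<one>\<^bsub>R\<^esub>) \<and>
     generate R (r ` P) = carrier R \<and>
     (\<forall>l\<in>L. \<forall>x y z. l = {x, y, z} \<longrightarrow>
        klein_four_subgroup R {\<one>\<^bsub>R\<^esub>, r x, r y, r z})"

definition faithful_representation ::
  "'p set \<Rightarrow> 'p set set \<Rightarrow> ('a, 'b) monoid_scheme \<Rightarrow> ('p \<Rightarrow> 'a) \<Rightarrow> bool" where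
  "faithful_representation P L R r \<longleftrightarrow> representation P L R r \<and>
     inj_on (\<lambda>x. generate R {r x}) P"

end

theory Submission
  imports Defs
begin

(* In a (2,t)-generalized quadrangle, counting gives |x^perp| = 2t + 3, |{u,v}^perp| = t + 1 for
   noncollinear u, v, and |P| = 3(2t + 1).  For t = 2 a faithful representation therefore contains
   the 16 distinct elements 1 and r_x (x in P), and |R| = 16 iff these exhaust R, i.e. iff every
   product r_a r_b is 1 or some r_c.  For collinear a, b this always holds, c being the third point
   of their line.  For noncollinear a, b the complete 3-arcs through a and b are exactly {a, b, c}
   with c the third point of the hyperbolic line {a,b}^perp^perp.  If R = {1} u r(P), then
   r_a r_b = r_x for a point x collinear with all of {a,b}^perp, which forces x = c; conversely,
   the relations r_a r_b r_c = 1 close {1} u r(P) under multiplication. *)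

lemma card_ge_3_obtain_other:
  assumes "3 \<le> card A"
  obtains x where "x \<in> A" "x \<noteq> a" "x \<noteq> b"
proof -
  have "\<not> A \<subseteq> {a, b}"
  proof
    assume "A \<subseteq> {a, b}"
    then have "card A \<le> card {a, b}"
      by (intro card_mono) simp_all
    also have "\<dots> \<le> 2"
      by (simp add: card_insert_if)
    finally show False
      using assms by simp
  qed
  then show ?thesis
    using that by blast
qed

locale gq2 =
  fixes t :: nat and P :: "'p set" and L :: "'p set set"
  assumes gq: "GQ2 t P L"
begin

abbreviation coll :: "'p \<Rightarrow> 'p \<Rightarrow> bool" where "coll \<equiv> collinear L"

lemma line_subset: "l \<in> L \<Longrightarrow> l \<subseteq> P"
  using gq by (simp add: GQ2_def partial_linear_space_def)

lemma finite_line: "l \<in> L \<Longrightarrow> finite l"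
  and card_line: "l \<in> L \<Longrightarrow> card l = 3"
  using gq by (simp_all add: GQ2_def)

lemma finite_lines_through: "x \<in> P \<Longrightarrow> finite {l\<in>L. x \<in> l}"
  and card_lines_through: "x \<in> P \<Longrightarrow> card {l\<in>L. x \<in> l} = t + 1"
  using gq by (simp_all add: GQ2_def)

lemma line_unique:
  assumes "l \<in> L" "m \<in> L" "x \<in> l" "y \<in> l" "x \<in> m" "y \<in> m" "x \<noteq> y"
  shows "l = m"
proof -
  have "x \<in> P" "y \<in> P"
    using assms line_subset by auto
  moreover have "\<forall>x\<in>P. \<forall>y\<in>P. x \<noteq> y \<longrightarrow>
      (\<forall>l\<in>L. \<forall>m\<in>L. x \<in> l \<and> y \<in> l \<and> x \<in> m \<and> y \<in> m \<longrightarrow> l = m)"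
    using gq by (simp add: GQ2_def partial_linear_space_def)
  ultimately show ?thesis
    using assms by blast
qed

lemma ex1_collinear_on_line: "\<lbrakk>x \<in> P; l \<in> L; x \<notin> l\<rbrakk> \<Longrightarrow> \<exists>!y. y \<in> l \<and> coll x y"
  using gq by (simp add: GQ2_def)

lemma P_nonempty: "P \<noteq> {}"
  using gq by (simp add: GQ2_def)

lemma collinearI: "\<lbrakk>l \<in> L; x \<in> l; y \<in> l\<rbrakk> \<Longrightarrow> coll x y"
  unfolding collinear_def by blast

lemma collinearE:
  assumes "coll x y"
  obtains l where "l \<in> L" "x \<in> l" "y \<in> l"
  using assms unfolding collinear_def by blast

lemma collinear_commute: "coll x y \<longleftrightarrow> coll y x"
  unfolding collinear_def by blast

lemma collinear_in_P: "coll x y \<Longrightarrow> x \<in> P" "coll x y \<Longrightarrow> y \<in> P"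
  using line_subset by (auto elim: collinearE)

lemma ex_line_through:
  assumes "x \<in> P"
  obtains l where "l \<in> L" "x \<in> l"
proof -
  have "{l\<in>L. x \<in> l} \<noteq> {}"
  proof
    assume "{l\<in>L. x \<in> l} = {}"
    then have "card {l\<in>L. x \<in> l} = 0"
      by (simp only: card.empty)
    then show False
      using card_lines_through[OF assms] by simp
  qed
  then show ?thesis
    using that by blast
qed

lemma collinear_refl: "x \<in> P \<Longrightarrow> coll x x"
  using collinearI by (blast elim: ex_line_through)

lemma mem_line_if_collinear_two:
  assumes "l \<in> L" "x \<in> l" "y \<in> l" "x \<noteq> y" "coll z x" "coll z y"
  shows "z \<in> l"
  using assms ex1_collinear_on_line[of z l] collinear_in_P(1)[OF assms(5)] by blast

lemma noncollinear_on_two_lines: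
  assumes "l \<in> L" "m \<in> L" "l \<noteq> m" "e \<in> l" "e \<in> m" "x \<in> l" "y \<in> m" "x \<noteq> e" "y \<noteq> e"
  shows "\<not> coll x y"
proof
  assume "coll x y"
  then have "y \<in> l"
    using mem_line_if_collinear_two[OF assms(1,4,6) assms(8)[symmetric]] collinearI[OF assms(2,7,5)]
    by (simp add: collinear_commute)
  then show False
    using line_unique[OF assms(1,2,4) _ assms(5,7)] assms(3,9) by blast
qed

lemma collinear_remaining_point:
  assumes "{p, q, w} \<in> L" "x \<in> P" "\<not> coll x p" "\<not> coll x q"
  shows "coll x w"
proof -
  have "x \<notin> {p, q, w}"
    using assms(3) collinearI[OF assms(1)] by blast
  then obtain y where "y \<in> {p, q, w}" "coll x y"
    using ex1_collinear_on_line[OF assms(2,1)] by blast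
  then show ?thesis
    using assms(3,4) by blast
qed

lemma line_eq_third_point:
  assumes "l \<in> L" "x \<in> l" "y \<in> l" "x \<noteq> y"
  obtains z where "l = {x, y, z}" "z \<noteq> x" "z \<noteq> y"
proof -
  have "card (l - {x, y}) = 1"
    using assms finite_line card_line by (simp add: card_Diff_subset)
  then obtain z where "l - {x, y} = {z}"
    by (auto simp: card_Suc_eq)
  then show ?thesis
    using that assms(2,3) by blast
qed

definition line_through :: "'p \<Rightarrow> 'p \<Rightarrow> 'p set" where
  "line_through x y = (THE l. l \<in> L \<and> x \<in> l \<and> y \<in> l)"

lemma line_through:
  assumes "coll x y" "x \<noteq> y"
  shows "line_through x y \<in> L" "x \<in> line_through x y" "y \<in> line_through x y"
proof -
  obtain l where l: "l \<in> L" "x \<in> l" "y \<in> l"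
    using assms(1) by (rule collinearE)
  have "line_through x y = l"
    unfolding line_through_def
  proof (rule the_equality)
    show "m = l" if "m \<in> L \<and> x \<in> m \<and> y \<in> m" for m
      using line_unique[of m l x y] that l assms(2) by simp
  qed (use l in simp)
  with l show "line_through x y \<in> L" "x \<in> line_through x y" "y \<in> line_through x y"
    by simp_all
qed

lemma noncollinear_on_lines_through:
  assumes ab: "\<not> coll a b" and e: "coll a e" "coll b e"
    and xy: "x \<in> line_through a e" "y \<in> line_through b e" "x \<noteq> e" "y \<noteq> e"
  shows "\<not> coll x y"
proof -
  have "a \<noteq> e" "b \<noteq> e"
    using ab e collinear_commute by blast+
  note la = line_through[OF e(1) this(1)] and lb = line_through[OF e(2) this(2)]
  have "line_through a e \<noteq> line_through b e"
    using collinearI[OF la(1,2)] lb(2) ab by metis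
  then show ?thesis
    using noncollinear_on_two_lines[OF la(1) lb(1) _ la(3) lb(3) xy] by blast
qed

definition perp :: "'p \<Rightarrow> 'p set" where
  "perp x = {y. coll x y}"

lemma perp_eq_Union_lines: "perp x = \<Union>{l\<in>L. x \<in> l}"
  unfolding perp_def collinear_def by blast

lemma card_perp:
  assumes "x \<in> P"
  shows "finite (perp x)" "card (perp x) = 2 * t + 3"
proof -
  let ?X = "{l\<in>L. x \<in> l}"
  define U where "U = (\<Union>l\<in>?X. l - {x})"
  obtain l0 where "l0 \<in> L" "x \<in> l0"
    using assms by (rule ex_line_through)
  then have perp_split: "perp x = insert x U" and "x \<notin> U"
    by (auto simp: perp_eq_Union_lines U_def)
  have disjoint: "(l - {x}) \<inter> (m - {x}) = {}" if "l \<in> ?X" "m \<in> ?X" "l \<noteq> m" for l m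
    using that line_unique by blast
  have "card U = (\<Sum>l\<in>?X. card (l - {x}))"
    unfolding U_def using disjoint finite_lines_through[OF assms] finite_line
    by (intro card_UN_disjoint) auto
  also have "\<dots> = (\<Sum>l\<in>?X. 2)"
    using finite_line card_line by (intro sum.cong) auto
  finally have "card U = 2 * (t + 1)"
    using card_lines_through[OF assms] by simp
  moreover have "finite U"
    unfolding U_def using finite_lines_through[OF assms] finite_line by auto
  ultimately show "finite (perp x)" "card (perp x) = 2 * t + 3"
    unfolding perp_split using \<open>x \<notin> U\<close> by simp_all
qed

lemma card_arc_in_perp_le:
  assumes x: "x \<in> P" and arc: "is_arc P L A" and A: "A \<subseteq> perp x - {x}"
  shows "card A \<le> t + 1"
proof -
  have line: "line_through x w \<in> L" "x \<in> line_through x w" "w \<in> line_through x w"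
    if "w \<in> A" for w
    using that A line_through[of x w] by (auto simp: perp_def)
  have "inj_on (line_through x) A"
  proof (rule inj_onI)
    fix w w' assume w: "w \<in> A" "w' \<in> A" and eq: "line_through x w = line_through x w'"
    then have "coll w w'"
      using line[OF w(1)] line[OF w(2)] by (metis collinearI)
    then show "w = w'"
      using arc w unfolding is_arc_def by blast
  qed
  then have "card A \<le> card {l\<in>L. x \<in> l}"
    using line finite_lines_through[OF x] by (intro card_inj_on_le) auto
  then show ?thesis
    using card_lines_through[OF x] by simp
qed

lemma trace_is_arc:
  assumes "\<not> coll u v"
  shows "is_arc P L (perp u \<inter> perp v)"
  unfolding is_arc_def
proof safe
  fix w assume "w \<in> perp u" then show "w \<in> P"
    using collinear_in_P(2)[of u w] by (simp add: perp_def)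
next
  fix w w' assume w: "w \<in> perp u" "w \<in> perp v" "w' \<in> perp u" "w' \<in> perp v" "w \<noteq> w'"
    and c: "coll w w'"
  note m = line_through[OF c w(5)]
  have "u \<in> line_through w w'" "v \<in> line_through w w'"
    using mem_line_if_collinear_two[OF m w(5)] w by (simp_all add: perp_def)
  then show False
    using assms collinearI[OF m(1)] by blast
qed

lemma card_trace:
  assumes u: "u \<in> P" and v: "v \<in> P" and uv: "\<not> coll u v"
  shows "card (perp u \<inter> perp v) = t + 1"
proof (rule antisym)
  have "u \<notin> perp v"
    using uv by (simp add: perp_def collinear_commute)
  then show "card (perp u \<inter> perp v) \<le> t + 1"
    using card_arc_in_perp_le[OF u trace_is_arc[OF uv]] by blast
next
  define g where "g l = (THE y. y \<in> l \<and> coll v y)" for l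
  have g: "g l \<in> l \<and> coll v (g l)" if "l \<in> L" "u \<in> l" for l
  proof -
    have "v \<notin> l"
      using that uv collinearI by blast
    then have "\<exists>!y. y \<in> l \<and> coll v y"
      using ex1_collinear_on_line v that(1) by blast
    then show ?thesis
      unfolding g_def by (rule theI')
  qed
  have "inj_on g {l\<in>L. u \<in> l}"
  proof (rule inj_onI)
    fix l m assume l: "l \<in> {l\<in>L. u \<in> l}" and m: "m \<in> {l\<in>L. u \<in> l}" and eq: "g l = g m"
    have "g l \<in> l" "coll v (g l)"
      using g l by simp_all
    moreover have "g l \<in> m"
      unfolding eq using g m by simp
    moreover have "g l \<noteq> u"
      using \<open>coll v (g l)\<close> uv collinear_commute by blast
    ultimately show "l = m"
      using line_unique[of l m u "g l"] l m by simp
  qed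
  moreover have "g ` {l\<in>L. u \<in> l} \<subseteq> perp u \<inter> perp v"
    using g collinearI by (auto simp: perp_def)
  moreover have "finite (perp u \<inter> perp v)"
    using card_perp(1)[OF u] by simp
  ultimately have "card {l\<in>L. u \<in> l} \<le> card (perp u \<inter> perp v)"
    by (rule card_inj_on_le)
  then show "t + 1 \<le> card (perp u \<inter> perp v)"
    using card_lines_through[OF u] by simp
qed

lemma perp_inter_perp_eq_line:
  assumes "coll a y" "a \<noteq> y"
  shows "perp a \<inter> perp y = line_through a y"
  using line_through[OF assms] mem_line_if_collinear_two[OF line_through[OF assms] assms(2)]
  by (auto simp: perp_def collinear_commute intro: collinearI)

lemma finite_P: "finite P"
proof -
  obtain a where a: "a \<in> P"
    using P_nonempty by blast
  have "P \<subseteq> (\<Union>y\<in>perp a. perp y)"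
  proof
    fix x assume x: "x \<in> P"
    show "x \<in> (\<Union>y\<in>perp a. perp y)"
    proof (cases "coll a x")
      case True
      then show ?thesis
        using collinear_refl[OF x] by (auto simp: perp_def)
    next
      case False
      obtain l where l: "l \<in> L" "a \<in> l"
        using a by (rule ex_line_through)
      have "x \<notin> l"
        using False l collinearI by blast
      then obtain y where y: "y \<in> l" "coll x y"
        using ex1_collinear_on_line[OF x l(1)] by blast
      have "coll a y" "coll y x"
        using collinearI[OF l y(1)] y(2) collinear_commute by blast+
      then have "y \<in> perp a" "x \<in> perp y"
        by (simp_all add: perp_def)
      then show ?thesis
        by blast
    qed
  qed
  moreover have "finite (\<Union>y\<in>perp a. perp y)"
    using card_perp(1) a collinear_in_P(2) by (auto simp: perp_def)
  ultimately show ?thesis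
    by (rule finite_subset)
qed

lemma card_perp_diff_perp:
  assumes "coll a y" "a \<noteq> y"
  shows "card (perp y - perp a) = 2 * t"
proof -
  have "card (perp y \<inter> perp a) = 3"
    using perp_inter_perp_eq_line[OF assms] line_through[OF assms] card_line
    by (simp add: Int_commute)
  then show ?thesis
    using card_perp[OF collinear_in_P(2)[OF assms(1)]] by (simp add: card_Diff_subset_Int)
qed

lemma card_P: "card P = 3 * (2 * t + 1)"
proof -
  \<comment> \<open>double counting of the collinear pairs \<open>(y, x)\<close> with \<open>y \<in> a\<^sup>\<bottom> - {a}\<close> and \<open>x \<notin> a\<^sup>\<bottom>\<close>\<close>
  obtain a where a: "a \<in> P"
    using P_nonempty by blast
  define Near where "Near = perp a - {a}"
  define Far where "Far = P - perp a"
  have perp_a: "perp a \<subseteq> P" "a \<in> perp a"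
    using collinear_in_P(2) collinear_refl[OF a] by (auto simp: perp_def)
  have fin: "finite Near" "finite Far"
    using card_perp(1)[OF a] finite_P by (simp_all add: Near_def Far_def)
  have card_Near: "card Near = 2 * t + 2"
    using card_perp[OF a] perp_a by (simp add: Near_def)
  have "card {y\<in>Near. coll y x} = t + 1" if "x \<in> Far" for x
  proof -
    have "\<not> coll a x" "x \<in> P"
      using that by (auto simp: Far_def perp_def)
    moreover from this have "{y\<in>Near. coll y x} = perp a \<inter> perp x"
      by (auto simp: Near_def perp_def collinear_commute)
    ultimately show ?thesis
      using card_trace[OF a] by simp
  qed
  then have "(t + 1) * card Far = (\<Sum>y\<in>Near. card {x\<in>Far. coll y x})"
    using fin by (intro sum_multicount[symmetric]) auto
  also have "\<dots> = (\<Sum>y\<in>Near. 2 * t)"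
  proof (rule sum.cong)
    fix y assume "y \<in> Near"
    then have "coll a y" "a \<noteq> y"
      by (auto simp: Near_def perp_def)
    moreover have "{x\<in>Far. coll y x} = perp y - perp a"
      using collinear_in_P(2) by (auto simp: Far_def perp_def)
    ultimately show "card {x\<in>Far. coll y x} = 2 * t"
      by (simp add: card_perp_diff_perp)
  qed simp
  also have "\<dots> = (t + 1) * (4 * t)"
    using card_Near by simp
  finally have "card Far = 4 * t"
    by (simp only: mult_left_cancel[of "t + 1"])
  moreover have "P = perp a \<union> Far" "perp a \<inter> Far = {}"
    using perp_a by (auto simp: Far_def)
  ultimately show ?thesis
    using card_perp[OF a] fin(2) card_Un_disjoint[of "perp a" Far] by simp
qed

lemma is_arc_subset: "is_arc P L B \<Longrightarrow> A \<subseteq> B \<Longrightarrow> is_arc P L A"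
  unfolding is_arc_def by blast

lemma is_arc_insert:
  "is_arc P L (insert d A) \<longleftrightarrow> is_arc P L A \<and> d \<in> P \<and> (\<forall>x\<in>A. x \<noteq> d \<longrightarrow> \<not> coll d x)"
  unfolding is_arc_def by (auto simp: collinear_commute)

lemma is_3_arc_iff:
  "is_k_arc P L 3 {a, b, c} \<longleftrightarrow>
     a \<in> P \<and> b \<in> P \<and> c \<in> P \<and> distinct [a, b, c] \<and> \<not> coll a b \<and> \<not> coll a c \<and> \<not> coll b c"
  by (auto simp: is_k_arc_def is_arc_def collinear_commute card_insert_if)

lemma complete_3_arc_iff:
  "complete_k_arc P L 3 {a, b, c} \<longleftrightarrow>
     is_k_arc P L 3 {a, b, c} \<and> (\<forall>d\<in>P. coll d a \<or> coll d b \<or> coll d c)"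
proof
  assume complete: "complete_k_arc P L 3 {a, b, c}"
  then have arc: "is_k_arc P L 3 {a, b, c}"
    by (simp add: complete_k_arc_def)
  moreover have "coll d a \<or> coll d b \<or> coll d c" if d: "d \<in> P" for d
  proof (rule ccontr)
    assume noncoll: "\<not> (coll d a \<or> coll d b \<or> coll d c)"
    then have "d \<notin> {a, b, c}"
      using collinear_refl[OF d] by auto
    moreover have "is_arc P L (insert d {a, b, c})"
      using arc d noncoll by (simp add: is_arc_insert is_k_arc_def)
    ultimately have "is_k_arc P L 4 (insert d {a, b, c})"
      using arc by (simp add: is_k_arc_def)
    then show False
      using complete by (auto simp: complete_k_arc_def)
  qed
  ultimately show "is_k_arc P L 3 {a, b, c} \<and> (\<forall>d\<in>P. coll d a \<or> coll d b \<or> coll d c)"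
    by blast
next
  assume "is_k_arc P L 3 {a, b, c} \<and> (\<forall>d\<in>P. coll d a \<or> coll d b \<or> coll d c)"
  then have arc: "is_k_arc P L 3 {a, b, c}" and cover: "\<forall>d\<in>P. coll d a \<or> coll d b \<or> coll d c"
    by blast+
  have "\<not> is_k_arc P L 4 B" if sub: "{a, b, c} \<subseteq> B" for B
  proof
    assume B: "is_k_arc P L 4 B"
    then have "B \<noteq> {a, b, c}"
      using arc by (auto simp: is_k_arc_def)
    then obtain d where d: "d \<in> B" "d \<notin> {a, b, c}"
      using sub by blast
    then have "d \<in> P" "\<not> coll d a" "\<not> coll d b" "\<not> coll d c"
      using B sub unfolding is_k_arc_def is_arc_def by blast+
    then show False
      using cover by blast
  qed
  then show "complete_k_arc P L 3 {a, b, c}"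
    using arc by (simp add: complete_k_arc_def)
qed

lemma ex_noncollinear_on_line:
  assumes m: "m \<in> L" and c: "c \<in> P" "c \<notin> m" and e: "e \<in> m"
  obtains d where "d \<in> m" "d \<noteq> e" "\<not> coll c d"
proof -
  have "m \<noteq> {e}"
    using card_line[OF m] by auto
  then obtain h where h: "h \<in> m" "h \<noteq> e"
    using e by blast
  then obtain k where "m = {e, h, k}" "k \<noteq> e" "k \<noteq> h"
    using line_eq_third_point[OF m e] by metis
  moreover have "\<not> (coll c h \<and> coll c k)"
    using mem_line_if_collinear_two[OF m _ _ \<open>k \<noteq> h\<close>[symmetric]] c(2) h(1) \<open>m = {e, h, k}\<close>
    by blast
  ultimately show ?thesis
    using that h by blast
qed

lemma ex_line_through_other:
  assumes "2 \<le> t" "x \<in> P"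
  obtains m where "m \<in> L" "x \<in> m" "m \<noteq> l\<^sub>1" "m \<noteq> l\<^sub>2"
proof -
  have "3 \<le> card {l\<in>L. x \<in> l}"
    using assms card_lines_through[OF assms(2)] by simp
  then show ?thesis
    using that by (elim card_ge_3_obtain_other) blast
qed

definition hyperbolic_line :: "'p \<Rightarrow> 'p \<Rightarrow> 'p set" where
  "hyperbolic_line a b = {c\<in>P. perp a \<inter> perp b \<subseteq> perp c}"

lemma mem_hyperbolic_line: "a \<in> P \<Longrightarrow> a \<in> hyperbolic_line a b" "b \<in> P \<Longrightarrow> b \<in> hyperbolic_line a b"
  by (auto simp: hyperbolic_line_def)

lemma hyperbolic_line_subset_trace:
  assumes "e\<^sub>1 \<in> perp a \<inter> perp b" "e\<^sub>2 \<in> perp a \<inter> perp b"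
  shows "hyperbolic_line a b \<subseteq> perp e\<^sub>1 \<inter> perp e\<^sub>2"
  using assms by (auto simp: hyperbolic_line_def perp_def collinear_commute)

lemma complete_3_arc_in_hyperbolic_line:
  assumes "2 \<le> t" and complete: "complete_k_arc P L 3 {a, b, c}"
  shows "c \<in> hyperbolic_line a b"
proof -
  have arc: "is_k_arc P L 3 {a, b, c}" and cover: "\<forall>d\<in>P. coll d a \<or> coll d b \<or> coll d c"
    using complete complete_3_arc_iff by blast+
  then have abc: "a \<noteq> b" "c \<in> P" "\<not> coll a b"
    by (simp_all add: is_3_arc_iff)
  have "coll e c" if e: "coll a e" "coll b e" for e
  proof (rule ccontr)
    \<comment> \<open>otherwise a third line through \<open>e\<close> has a point collinear with none of \<open>a\<close>, \<open>b\<close>, \<open>c\<close>\<close>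
    assume ec: "\<not> coll e c"
    have ea: "e \<noteq> a" and eb: "e \<noteq> b"
      using e abc(3) collinear_commute by blast+
    have ae: "coll e a" and be: "coll e b"
      using e collinear_commute by blast+
    note la = line_through[OF ae ea] and lb = line_through[OF be eb]
    obtain m where m: "m \<in> L" "e \<in> m" "m \<noteq> line_through e a" "m \<noteq> line_through e b"
      using ex_line_through_other[OF assms(1) collinear_in_P(1)[OF ae]] by metis
    have "c \<notin> m"
      using ec collinearI[OF m(1,2)] by blast
    then obtain d where d: "d \<in> m" "d \<noteq> e" "\<not> coll c d"
      using ex_noncollinear_on_line[OF m(1) abc(2) _ m(2)] by metis
    have da: "\<not> coll d a" and db: "\<not> coll d b"
      using noncollinear_on_two_lines[OF m(1) la(1) m(3) m(2) la(2) d(1) la(3) d(2)]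
        noncollinear_on_two_lines[OF m(1) lb(1) m(4) m(2) lb(2) d(1) lb(3) d(2)] ea eb
      by auto
    have "d \<in> P"
      using d(1) line_subset[OF m(1)] by blast
    then show False
      using cover da db d(3) collinear_commute by blast
  qed
  then show ?thesis
    using abc(2) by (auto simp: hyperbolic_line_def perp_def collinear_commute)
qed

end

locale gq22 = gq2 2 P L for P :: "'p set" and L :: "'p set set"
begin

lemma trace_eq_3_points:
  assumes "a \<in> P" "b \<in> P" "\<not> coll a b"
  obtains e\<^sub>1 e\<^sub>2 e\<^sub>3 where "perp a \<inter> perp b = {e\<^sub>1, e\<^sub>2, e\<^sub>3}" "distinct [e\<^sub>1, e\<^sub>2, e\<^sub>3]"
  using card_trace[OF assms] that by (auto simp: card_3_iff)

lemma
  assumes "a \<in> P" "b \<in> P" "\<not> coll a b"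
  shows finite_hyperbolic_line: "finite (hyperbolic_line a b)"
    and card_hyperbolic_line_le: "card (hyperbolic_line a b) \<le> 3"
    and hyperbolic_line_arc: "is_arc P L (hyperbolic_line a b)"
proof -
  obtain e\<^sub>1 e\<^sub>2 e\<^sub>3 where T: "perp a \<inter> perp b = {e\<^sub>1, e\<^sub>2, e\<^sub>3}" "distinct [e\<^sub>1, e\<^sub>2, e\<^sub>3]"
    using trace_eq_3_points[OF assms] .
  then have "\<not> coll e\<^sub>1 e\<^sub>2" "e\<^sub>1 \<in> P" "e\<^sub>2 \<in> P"
    using trace_is_arc[OF assms(3)] unfolding is_arc_def by auto
  moreover have sub: "hyperbolic_line a b \<subseteq> perp e\<^sub>1 \<inter> perp e\<^sub>2"
    using T by (intro hyperbolic_line_subset_trace) auto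
  ultimately have fin: "finite (perp e\<^sub>1 \<inter> perp e\<^sub>2)" and card: "card (perp e\<^sub>1 \<inter> perp e\<^sub>2) = 3"
    and arc: "is_arc P L (perp e\<^sub>1 \<inter> perp e\<^sub>2)"
    using card_perp(1) card_trace[of e\<^sub>1 e\<^sub>2] trace_is_arc by simp_all
  show "finite (hyperbolic_line a b)"
    using finite_subset[OF sub fin] .
  show "card (hyperbolic_line a b) \<le> 3"
    using card_mono[OF fin sub] card by simp
  show "is_arc P L (hyperbolic_line a b)"
    using arc sub unfolding is_arc_def by blast
qed

lemma trace_point_on_line_through:
  assumes u: "u \<in> P" and uv: "\<not> coll u v"
    and T: "perp u \<inter> perp v = {e\<^sub>1, e\<^sub>2, e\<^sub>3}" "distinct [e\<^sub>1, e\<^sub>2, e\<^sub>3]"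
    and c: "coll c e\<^sub>1" "coll c e\<^sub>2" "\<not> coll c u" "\<not> coll c e\<^sub>3"
  obtains z where "z \<in> perp u \<inter> perp c" "z \<notin> {e\<^sub>1, e\<^sub>2, e\<^sub>3}" "z \<in> line_through u e\<^sub>3"
proof -
  have e3: "coll u e\<^sub>3" "coll v e\<^sub>3"
    using T(1) by (auto simp: perp_def)
  then have cP: "c \<in> P" and vP: "v \<in> P" and ue3: "coll u e\<^sub>3" "u \<noteq> e\<^sub>3"
    using c(1) uv collinear_in_P collinear_commute by blast+
  have "card (perp u \<inter> perp c) = 3"
    using card_trace[OF u cP] c(3) by (simp add: collinear_commute)
  then obtain z where z: "z \<in> perp u \<inter> perp c" "z \<noteq> e\<^sub>1" "z \<noteq> e\<^sub>2"
    using card_ge_3_obtain_other[of "perp u \<inter> perp c" e\<^sub>1 e\<^sub>2] by auto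
  have uz: "coll u z" "u \<noteq> z" and cz: "coll c z"
    using z(1) c(3) by (auto simp: perp_def)
  note l = line_through[OF uz]
  have "v \<notin> line_through u z"
    using uv collinearI[OF l(1,2)] by blast
  then obtain y where y: "y \<in> line_through u z" "coll v y"
    using ex1_collinear_on_line[OF vP l(1)] by blast
  then have "y \<in> {e\<^sub>1, e\<^sub>2, e\<^sub>3}"
    unfolding T(1)[symmetric] using collinearI[OF l(1,2)] by (simp add: perp_def)
  moreover have "y \<noteq> e" if "coll c e" "e \<noteq> z" for e
  proof
    assume "y = e"
    then have "c \<in> line_through u z"
      using mem_line_if_collinear_two[OF l(1) _ l(3) that(2)] y(1) that(1) cz by blast
    then show False
      using c(3) collinearI[OF l(1) _ l(2)] by blast
  qed
  ultimately have "e\<^sub>3 \<in> line_through u z"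
    using y(1) c(1,2) z(2,3) by blast
  then have "line_through u z = line_through u e\<^sub>3"
    using line_unique[OF l(1) line_through(1)[OF ue3] l(2) _ line_through(2,3)[OF ue3] ue3(2)]
    by blast
  moreover have "z \<noteq> e\<^sub>3"
    using cz c(4) by blast
  ultimately show ?thesis
    using that z l(3) by auto
qed

lemma collinear_third_trace_point:
  assumes a: "a \<in> P" and b: "b \<in> P" and ab: "\<not> coll a b"
    and T: "perp a \<inter> perp b = {e\<^sub>1, e\<^sub>2, e\<^sub>3}" "distinct [e\<^sub>1, e\<^sub>2, e\<^sub>3]"
    and c: "coll c e\<^sub>1" "coll c e\<^sub>2" "\<not> coll c a" "\<not> coll c b"
  shows "coll c e\<^sub>3"
proof (rule ccontr)
  \<comment> \<open>otherwise \<open>c\<close> is collinear with four pairwise noncollinear points,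
    but lies on only three lines\<close>
  assume ce3: "\<not> coll c e\<^sub>3"
  have ba: "\<not> coll b a" and T': "perp b \<inter> perp a = {e\<^sub>1, e\<^sub>2, e\<^sub>3}"
    using ab T(1) by (simp_all add: collinear_commute Int_commute)
  obtain z\<^sub>a where za: "z\<^sub>a \<in> perp a \<inter> perp c" "z\<^sub>a \<notin> {e\<^sub>1, e\<^sub>2, e\<^sub>3}" "z\<^sub>a \<in> line_through a e\<^sub>3"
    using trace_point_on_line_through[OF a ab T c(1-3) ce3] .
  obtain z\<^sub>b where zb: "z\<^sub>b \<in> perp b \<inter> perp c" "z\<^sub>b \<notin> {e\<^sub>1, e\<^sub>2, e\<^sub>3}" "z\<^sub>b \<in> line_through b e\<^sub>3"
    using trace_point_on_line_through[OF b ba T' T(2) c(1,2,4) ce3] .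
  have "e\<^sub>3 \<in> perp a \<inter> perp b"
    using T(1) by simp
  then have "coll a e\<^sub>3" "coll b e\<^sub>3"
    by (simp_all add: perp_def)
  then have zab: "\<not> coll z\<^sub>a z\<^sub>b"
    using noncollinear_on_lines_through[OF ab _ _ za(3) zb(3)] za(2) zb(2) by simp
  have "z\<^sub>a \<noteq> z\<^sub>b"
    using za(1,2) zb(1) T(1) by auto
  then have "card {e\<^sub>1, e\<^sub>2, z\<^sub>a, z\<^sub>b} = 4"
    using T(2) za(2) zb(2) by (auto simp: card_insert_if)
  moreover have "is_arc P L {e\<^sub>1, e\<^sub>2, z\<^sub>a, z\<^sub>b}"
  proof -
    have "{e\<^sub>1, e\<^sub>2, z\<^sub>a} \<subseteq> perp a \<inter> perp c" "{e\<^sub>1, e\<^sub>2, z\<^sub>b} \<subseteq> perp b \<inter> perp c"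
      using T(1) c(1,2) za(1) zb(1) by (auto simp: perp_def collinear_commute)
    moreover have "\<not> coll a c" "\<not> coll b c"
      using c(3,4) by (simp_all add: collinear_commute)
    ultimately have "is_arc P L {e\<^sub>1, e\<^sub>2, z\<^sub>a}" "is_arc P L {e\<^sub>1, e\<^sub>2, z\<^sub>b}"
      using is_arc_subset[OF trace_is_arc] by blast+
    then have "is_arc P L (insert z\<^sub>a {e\<^sub>1, e\<^sub>2, z\<^sub>b})"
      using zab unfolding is_arc_insert by (auto simp: is_arc_def collinear_commute)
    then show ?thesis
      by (simp add: insert_commute)
  qed
  moreover have "{e\<^sub>1, e\<^sub>2, z\<^sub>a, z\<^sub>b} \<subseteq> perp c - {c}"
    using T(1) c za(1) zb(1) by (auto simp: perp_def collinear_commute)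
  ultimately show False
    using card_arc_in_perp_le[OF collinear_in_P(1)[OF c(1)]] by fastforce
qed

lemma ex_hyperbolic_point:
  assumes a: "a \<in> P" and b: "b \<in> P" and ab: "\<not> coll a b"
  obtains c where "c \<in> hyperbolic_line a b" "c \<noteq> a" "c \<noteq> b"
proof -
  obtain e\<^sub>1 e\<^sub>2 e\<^sub>3 where T: "perp a \<inter> perp b = {e\<^sub>1, e\<^sub>2, e\<^sub>3}" "distinct [e\<^sub>1, e\<^sub>2, e\<^sub>3]"
    using trace_eq_3_points[OF a b ab] .
  then have "\<not> coll e\<^sub>1 e\<^sub>2" "e\<^sub>1 \<in> P" "e\<^sub>2 \<in> P"
    using trace_is_arc[OF ab] unfolding is_arc_def by auto
  then have arc: "is_arc P L (perp e\<^sub>1 \<inter> perp e\<^sub>2)" and "card (perp e\<^sub>1 \<inter> perp e\<^sub>2) = 3"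
    using trace_is_arc card_trace by simp_all
  then obtain c where c: "c \<in> perp e\<^sub>1 \<inter> perp e\<^sub>2" "c \<noteq> a" "c \<noteq> b"
    using card_ge_3_obtain_other[of "perp e\<^sub>1 \<inter> perp e\<^sub>2" a b] by auto
  moreover have "a \<in> perp e\<^sub>1 \<inter> perp e\<^sub>2" "b \<in> perp e\<^sub>1 \<inter> perp e\<^sub>2"
    using T(1) by (auto simp: perp_def collinear_commute)
  ultimately have "\<not> coll c a" "\<not> coll c b"
    using arc unfolding is_arc_def by blast+
  moreover have "coll c e\<^sub>1" "coll c e\<^sub>2"
    using c(1) by (simp_all add: perp_def collinear_commute)
  ultimately have "coll c e\<^sub>3"
    using collinear_third_trace_point[OF a b ab T] by blast
  with \<open>coll c e\<^sub>1\<close> \<open>coll c e\<^sub>2\<close> have "perp a \<inter> perp b \<subseteq> perp c"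
    unfolding T(1) by (simp add: perp_def collinear_commute)
  then have "c \<in> hyperbolic_line a b"
    using collinear_in_P(1)[OF \<open>coll c e\<^sub>1\<close>] by (simp add: hyperbolic_line_def)
  then show ?thesis
    using that c by blast
qed

lemma complete_3_arc_if_in_hyperbolic_line:
  assumes a: "a \<in> P" and b: "b \<in> P" and ab: "\<not> coll a b"
    and c: "c \<in> hyperbolic_line a b" "c \<noteq> a" "c \<noteq> b"
  shows "complete_k_arc P L 3 {a, b, c}"
proof -
  \<comment> \<open>inclusion-exclusion: the three pairwise traces all equal \<open>{a,b}\<^sup>\<bottom>\<close>,
    so \<open>a\<^sup>\<bottom> \<union> b\<^sup>\<bottom> \<union> c\<^sup>\<bottom>\<close> has \<open>3 \<cdot> 7 - 3 \<cdot> 3 + 3 = 15\<close> points\<close>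
  let ?T = "perp a \<inter> perp b"
  have "{a, b, c} \<subseteq> hyperbolic_line a b"
    using mem_hyperbolic_line a b c(1) by blast
  then have "is_arc P L {a, b, c}"
    using is_arc_subset[OF hyperbolic_line_arc[OF a b ab]] by blast
  moreover have "a \<noteq> b"
    using ab collinear_refl[OF a] by blast
  ultimately have arc: "is_k_arc P L 3 {a, b, c}"
    using c(2,3) by (auto simp: is_k_arc_def)
  then have ac: "\<not> coll a c" and bc: "\<not> coll b c" and cP: "c \<in> P"
    by (simp_all add: is_3_arc_iff)
  have T: "card ?T = 3" "?T \<subseteq> perp c"
    using card_trace[OF a b ab] c(1) by (simp_all add: hyperbolic_line_def)
  have "?T \<subseteq> perp a \<inter> perp c" "?T \<subseteq> perp b \<inter> perp c"
    using T(2) by blast+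
  then have ac_eq: "?T = perp a \<inter> perp c" and bc_eq: "?T = perp b \<inter> perp c"
    using T(1) card_trace[OF a cP ac] card_trace[OF b cP bc] card_perp(1)[OF a] card_perp(1)[OF b]
    by (simp_all add: card_subset_eq)
  have "card (perp a \<union> perp b) = 11"
    using card_Un_Int[of "perp a" "perp b"] card_perp[OF a] card_perp[OF b] T(1) by simp
  moreover have "(perp a \<union> perp b) \<inter> perp c = ?T"
    unfolding Int_Un_distrib2 ac_eq[symmetric] bc_eq[symmetric] by simp
  ultimately have "card (perp a \<union> perp b \<union> perp c) = 15"
    using card_Un_Int[of "perp a \<union> perp b" "perp c"] card_perp[OF a] card_perp[OF b]
      card_perp[OF cP] T(1)
    by simp
  moreover have "perp a \<union> perp b \<union> perp c \<subseteq> P"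
    using collinear_in_P(2) by (auto simp: perp_def)
  ultimately have "perp a \<union> perp b \<union> perp c = P"
    using card_subset_eq[OF finite_P] card_P by simp
  then show ?thesis
    using arc complete_3_arc_iff by (auto simp: perp_def collinear_commute)
qed

lemma complete_3_arc_iff_hyperbolic_line:
  "complete_k_arc P L 3 {a, b, c} \<longleftrightarrow>
     a \<in> P \<and> b \<in> P \<and> \<not> coll a b \<and> c \<in> hyperbolic_line a b - {a, b}"
proof
  assume complete: "complete_k_arc P L 3 {a, b, c}"
  then have "is_k_arc P L 3 {a, b, c}"
    by (simp add: complete_k_arc_def)
  then show "a \<in> P \<and> b \<in> P \<and> \<not> coll a b \<and> c \<in> hyperbolic_line a b - {a, b}"
    using complete_3_arc_in_hyperbolic_line[OF _ complete] by (auto simp: is_3_arc_iff)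
next
  assume "a \<in> P \<and> b \<in> P \<and> \<not> coll a b \<and> c \<in> hyperbolic_line a b - {a, b}"
  then show "complete_k_arc P L 3 {a, b, c}"
    using complete_3_arc_if_in_hyperbolic_line by blast
qed

lemma ex_complete_3_arc:
  assumes "a \<in> P" "b \<in> P" "\<not> coll a b"
  obtains c where "complete_k_arc P L 3 {a, b, c}"
  using ex_hyperbolic_point[OF assms] complete_3_arc_if_in_hyperbolic_line[OF assms] by metis

lemma complete_3_arc_unique:
  assumes "complete_k_arc P L 3 {a, b, c}" "complete_k_arc P L 3 {a, b, c'}"
  shows "c = c'"
proof (rule ccontr)
  assume "c \<noteq> c'"
  have ab: "a \<in> P" "b \<in> P" "\<not> coll a b"
    and c: "c \<in> hyperbolic_line a b" "c \<noteq> a" "c \<noteq> b"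
    and c': "c' \<in> hyperbolic_line a b" "c' \<noteq> a" "c' \<noteq> b"
    using assms complete_3_arc_iff_hyperbolic_line by blast+
  have "a \<noteq> b"
    using ab collinear_refl by blast
  with c c' \<open>c \<noteq> c'\<close> have "distinct [a, b, c, c']"
    by auto
  then have "card {a, b, c, c'} = 4"
    using distinct_card[of "[a, b, c, c']"] by simp
  moreover have "{a, b, c, c'} \<subseteq> hyperbolic_line a b"
    using mem_hyperbolic_line ab c(1) c'(1) by blast
  then have "card {a, b, c, c'} \<le> card (hyperbolic_line a b)"
    by (rule card_mono[OF finite_hyperbolic_line[OF ab]])
  ultimately show False
    using card_hyperbolic_line_le[OF ab] by simp
qed

end

locale gq_representation = gq2 t P L for t :: nat and P :: "'p set" and L :: "'p set set" +
  fixes R :: "('a, 'b) monoid_scheme" and r :: "'p \<Rightarrow> 'a"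
  assumes faithful: "faithful_representation P L R r"
begin

lemma representation: "representation P L R r"
  using faithful by (simp add: faithful_representation_def)

sublocale group R
  using representation by (simp add: representation_def)

lemma r_closed: "x \<in> P \<Longrightarrow> r x \<in> carrier R"
  and r_neq_one: "x \<in> P \<Longrightarrow> r x \<noteq> \<one>\<^bsub>R\<^esub>"
  and r_involution: "x \<in> P \<Longrightarrow> r x \<otimes>\<^bsub>R\<^esub> r x = \<one>\<^bsub>R\<^esub>"
  using representation by (simp_all add: representation_def)

lemma generate_r_points: "generate R (r ` P) = carrier R"
  using representation by (simp add: representation_def)

lemma inv_r: "x \<in> P \<Longrightarrow> inv\<^bsub>R\<^esub> r x = r x"
  using inv_equality r_involution r_closed by blast

lemma inj_on_r: "inj_on r P"
  using faithful unfolding faithful_representation_def inj_on_def by metis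

lemma r_mult_line:
  assumes l: "l \<in> L" "x \<in> l" "y \<in> l" "z \<in> l" and distinct: "distinct [x, y, z]"
  shows "r x \<otimes>\<^bsub>R\<^esub> r y = r z"
proof -
  have "l = {x, y, z}"
    using l distinct card_line[OF l(1)] finite_line[OF l(1)]
    by (intro card_subset_eq[symmetric]) (auto simp: card_insert_if)
  then have "subgroup {\<one>\<^bsub>R\<^esub>, r x, r y, r z} R"
    using representation l(1) by (simp add: representation_def klein_four_subgroup_def)
  then have "r x \<otimes>\<^bsub>R\<^esub> r y \<in> {\<one>\<^bsub>R\<^esub>, r x, r y, r z}"
    by (rule subgroup.m_closed) simp_all
  moreover have P: "x \<in> P" "y \<in> P" "z \<in> P"
    using l line_subset by auto
  moreover have "r x \<noteq> r y"
    using inj_on_r P distinct by (auto dest: inj_onD)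
  moreover have "r x \<otimes>\<^bsub>R\<^esub> r y \<noteq> \<one>\<^bsub>R\<^esub>"
    using inv_equality[of "r x" "r y"] inv_r[of y] P \<open>r x \<noteq> r y\<close> r_closed by force
  ultimately show ?thesis
    using r_closed r_neq_one by auto
qed

lemma r_mult_swap:
  assumes "a \<in> P" "b \<in> P" "x \<in> P" "r a \<otimes>\<^bsub>R\<^esub> r b = r x"
  shows r_mult_commute: "r b \<otimes>\<^bsub>R\<^esub> r a = r x"
    and r_mult_left_swap: "r a \<otimes>\<^bsub>R\<^esub> r x = r b"
proof -
  show "r b \<otimes>\<^bsub>R\<^esub> r a = r x"
    using inv_mult_group[of "r a" "r b"] assms inv_r r_closed by simp
  show "r a \<otimes>\<^bsub>R\<^esub> r x = r b"
    using inv_solve_left[of "r b" "r a" "r x"] assms inv_r r_closed by simp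
qed

lemma r_mult_noncollinear:
  assumes a: "a \<in> P" and b: "b \<in> P" and ab: "\<not> coll a b"
    and x: "x \<in> P" and prod: "r a \<otimes>\<^bsub>R\<^esub> r b = r x"
  shows "\<not> coll a x"
proof
  assume ax: "coll a x"
  have "x \<noteq> a"
    using prod r_closed r_neq_one a b by auto
  then obtain y where l: "line_through a x = {a, x, y}" "y \<noteq> a" "y \<noteq> x"
    using line_eq_third_point[OF line_through[OF ax]] by metis
  note lx = line_through[OF ax \<open>x \<noteq> a\<close>[symmetric]]
  have yP: "y \<in> P"
    using l(1) line_subset[OF lx(1)] by blast
  have "r y = r a \<otimes>\<^bsub>R\<^esub> r x"
    using r_mult_line[OF lx(1), of a x y] l \<open>x \<noteq> a\<close> by simp
  also have "\<dots> = r b"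
    using r_mult_left_swap[OF a b x prod] .
  finally have "y = b"
    using inj_on_r yP b by (auto dest: inj_onD)
  then show False
    using ab collinearI[OF lx(1,2)] l(1) by blast
qed

lemma one_r_points_subset: "insert \<one>\<^bsub>R\<^esub> (r ` P) \<subseteq> carrier R"
  using r_closed by auto

lemma r_mult_collinear_mem:
  assumes "coll x y"
  shows "r x \<otimes>\<^bsub>R\<^esub> r y \<in> insert \<one>\<^bsub>R\<^esub> (r ` P)"
proof (cases "x = y")
  case False
  note l = line_through[OF assms False]
  obtain z where "line_through x y = {x, y, z}" "z \<noteq> x" "z \<noteq> y"
    using line_eq_third_point[OF l False] .
  moreover from this have "z \<in> P"
    using line_subset[OF l(1)] by auto
  ultimately show ?thesis
    using r_mult_line[OF l(1), of x y z] False by simp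
qed (use r_involution collinear_in_P(2)[OF assms] in simp)

lemma carrier_eq_if_r_mult_closed:
  assumes mult: "\<And>x y. x \<in> P \<Longrightarrow> y \<in> P \<Longrightarrow> r x \<otimes>\<^bsub>R\<^esub> r y \<in> insert \<one>\<^bsub>R\<^esub> (r ` P)"
  shows "carrier R = insert \<one>\<^bsub>R\<^esub> (r ` P)"
proof -
  let ?S = "insert \<one>\<^bsub>R\<^esub> (r ` P)"
  have "subgroup ?S R"
  proof (rule subgroupI)
    show "inv\<^bsub>R\<^esub> g \<in> ?S" if "g \<in> ?S" for g
      using that inv_r by auto
    show "g \<otimes>\<^bsub>R\<^esub> h \<in> ?S" if "g \<in> ?S" "h \<in> ?S" for g h
      using that mult r_closed by auto
  qed (use one_r_points_subset in auto)
  then have "generate R (r ` P) \<subseteq> ?S"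
    by (intro generate_subgroup_incl) auto
  then show ?thesis
    using generate_r_points one_r_points_subset by auto
qed

lemma r_mult_third_points:
  assumes "{a, e, f} \<in> L" "distinct [a, e, f]" "{b, e, g} \<in> L" "distinct [b, e, g]"
    and "x \<in> P" "r a \<otimes>\<^bsub>R\<^esub> r b = r x"
  shows "r f \<otimes>\<^bsub>R\<^esub> r x = r g"
proof -
  have P: "a \<in> P" "b \<in> P" "e \<in> P"
    using assms(1,3) line_subset by auto
  have "r f \<otimes>\<^bsub>R\<^esub> r x = (r e \<otimes>\<^bsub>R\<^esub> r a) \<otimes>\<^bsub>R\<^esub> (r a \<otimes>\<^bsub>R\<^esub> r b)"
    using r_mult_line[OF assms(1), of e a f] assms(2,6) by auto
  also have "\<dots> = r e \<otimes>\<^bsub>R\<^esub> (r a \<otimes>\<^bsub>R\<^esub> r a) \<otimes>\<^bsub>R\<^esub> r b"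
    using P r_closed by (simp add: m_assoc)
  also have "\<dots> = r g"
    using r_involution P r_closed r_mult_line[OF assms(3), of e b g] assms(4) by auto
  finally show ?thesis .
qed

lemma r_mult_in_hyperbolic_line:
  assumes a: "a \<in> P" and b: "b \<in> P" and ab: "\<not> coll a b"
    and x: "x \<in> P" and prod: "r a \<otimes>\<^bsub>R\<^esub> r b = r x"
  shows "x \<in> hyperbolic_line a b"
proof -
  have ax: "\<not> coll x a" and bx: "\<not> coll x b"
    using r_mult_noncollinear[OF a b ab x prod]
      r_mult_noncollinear[OF b a _ x r_mult_commute[OF a b x prod]] ab
    by (simp_all add: collinear_commute)
  have "coll x e" if e: "coll a e" "coll b e" for e
  proof (rule ccontr)
    \<comment> \<open>otherwise \<open>x\<close> is collinear with the third points \<open>f\<close>, \<open>g\<close> of the lines \<open>ae\<close>, \<open>be\<close>,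
      and \<open>r\<^sub>f r\<^sub>x = r\<^sub>g\<close> puts \<open>g\<close> on the line \<open>fx\<close>\<close>
    assume xe: "\<not> coll x e"
    have "a \<noteq> e" "b \<noteq> e"
      using e ab collinear_commute by blast+
    note la = line_through[OF e(1) this(1)] and lb = line_through[OF e(2) this(2)]
    obtain f where f: "line_through a e = {a, e, f}" "f \<noteq> a" "f \<noteq> e"
      using line_eq_third_point[OF la \<open>a \<noteq> e\<close>] .
    obtain g where g: "line_through b e = {b, e, g}" "g \<noteq> b" "g \<noteq> e"
      using line_eq_third_point[OF lb \<open>b \<noteq> e\<close>] .
    have fx: "coll f x"
      using collinear_remaining_point[OF _ x ax xe] la(1) f(1) collinear_commute by metis
    have "f \<noteq> x"
      using collinearI[OF la(1,2)] f(1) ax collinear_commute by blast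
    note lfx = line_through[OF fx this]
    obtain u where u: "line_through f x = {f, x, u}" "u \<noteq> f" "u \<noteq> x"
      using line_eq_third_point[OF lfx \<open>f \<noteq> x\<close>] .
    have "r u = r f \<otimes>\<^bsub>R\<^esub> r x"
      using r_mult_line[OF lfx(1), of f x u] u \<open>f \<noteq> x\<close> by simp
    also have "\<dots> = r g"
      using r_mult_third_points[OF _ _ _ _ x prod] la(1) lb(1) f g \<open>a \<noteq> e\<close> \<open>b \<noteq> e\<close> by simp
    finally have "u = g"
      using inj_on_r line_subset lfx(1) lb(1) u(1) g(1) by (auto dest: inj_onD)
    then have "coll f g"
      using collinearI[OF lfx(1)] u(1) by simp
    then show False
      using noncollinear_on_lines_through[OF ab e] f g by simp
  qed
  then show ?thesis
    using x by (auto simp: hyperbolic_line_def perp_def collinear_commute)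
qed

end

locale gq22_representation = gq_representation 2 P L R r
  for P :: "'p set" and L :: "'p set set" and R :: "('a, 'b) monoid_scheme" and r :: "'p \<Rightarrow> 'a"

sublocale gq22_representation \<subseteq> gq22
  by unfold_locales

context gq22_representation
begin

lemma card_one_r_points: "card (insert \<one>\<^bsub>R\<^esub> (r ` P)) = 16"
proof -
  have "\<one>\<^bsub>R\<^esub> \<notin> r ` P"
    using r_neq_one by force
  moreover have "card (r ` P) = 15"
    using card_image[OF inj_on_r] card_P by simp
  ultimately show ?thesis
    using finite_P by simp
qed

lemma complete_3_arc_r_mult:
  assumes carrier: "carrier R = insert \<one>\<^bsub>R\<^esub> (r ` P)"
    and complete: "complete_k_arc P L 3 {a, b, c}"
  shows "r a \<otimes>\<^bsub>R\<^esub> r b \<otimes>\<^bsub>R\<^esub> r c = \<one>\<^bsub>R\<^esub>"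
proof -
  have a: "a \<in> P" and b: "b \<in> P" and ab: "\<not> coll a b" and c: "c \<in> P"
    using complete by (auto simp: complete_k_arc_def is_3_arc_iff)
  have "r a \<otimes>\<^bsub>R\<^esub> r b \<noteq> \<one>\<^bsub>R\<^esub>"
  proof
    assume "r a \<otimes>\<^bsub>R\<^esub> r b = \<one>\<^bsub>R\<^esub>"
    then have "r a = r b"
      using inv_equality[of "r a" "r b"] inv_r[OF b] a b r_closed by simp
    then show False
      using inj_on_r a b ab collinear_refl[OF a] by (auto dest: inj_onD)
  qed
  moreover have "r a \<otimes>\<^bsub>R\<^esub> r b \<in> carrier R"
    using a b r_closed by simp
  ultimately obtain x where x: "x \<in> P" and prod: "r a \<otimes>\<^bsub>R\<^esub> r b = r x"
    unfolding carrier by auto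
  have "x \<noteq> a" "x \<noteq> b"
    using r_mult_noncollinear[OF a b ab x prod] r_mult_noncollinear[OF b a _ x r_mult_commute[OF a b x prod]]
      ab collinear_refl[OF x] by (auto simp: collinear_commute)
  then have "complete_k_arc P L 3 {a, b, x}"
    using complete_3_arc_iff_hyperbolic_line r_mult_in_hyperbolic_line[OF a b ab x prod] a b ab
    by blast
  then have "x = c"
    using complete_3_arc_unique[OF _ complete] by blast
  then show ?thesis
    using prod r_involution[OF c] by simp
qed

lemma r_mult_mem_if_complete_3_arcs:
  assumes arcs: "\<forall>a b c. complete_k_arc P L 3 {a, b, c} \<longrightarrow> r a \<otimes>\<^bsub>R\<^esub> r b \<otimes>\<^bsub>R\<^esub> r c = \<one>\<^bsub>R\<^esub>"
    and x: "x \<in> P" and y: "y \<in> P"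
  shows "r x \<otimes>\<^bsub>R\<^esub> r y \<in> insert \<one>\<^bsub>R\<^esub> (r ` P)"
proof (cases "coll x y")
  case False
  then obtain c where complete: "complete_k_arc P L 3 {x, y, c}"
    using ex_complete_3_arc x y by metis
  then have "c \<in> P"
    by (simp add: complete_k_arc_def is_3_arc_iff)
  moreover have "inv\<^bsub>R\<^esub> r c = r x \<otimes>\<^bsub>R\<^esub> r y"
    using arcs complete x y \<open>c \<in> P\<close> r_closed by (intro inv_equality) auto
  ultimately show ?thesis
    using inv_r by (metis image_eqI insertCI)
qed (rule r_mult_collinear_mem)

lemma order_eq_16_iff: "order R = 16 \<longleftrightarrow> carrier R = insert \<one>\<^bsub>R\<^esub> (r ` P)"
proof
  assume "order R = 16"
  then have "finite (carrier R)" "card (carrier R) = 16"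
    unfolding order_def by (auto intro: card_ge_0_finite)
  then show "carrier R = insert \<one>\<^bsub>R\<^esub> (r ` P)"
    using card_subset_eq one_r_points_subset card_one_r_points by metis
qed (simp add: order_def card_one_r_points)

end

theorem proposition3p5:
  fixes P :: "'p set" and L :: "'p set set"
    and R :: "('a, 'b) monoid_scheme" and r :: "'p \<Rightarrow> 'a"
  assumes "GQ2 2 P L"
    and "faithful_representation P L R r"
  shows "order R = 2 ^ 4 \<longleftrightarrow>
         (\<forall>a b c. complete_k_arc P L 3 {a, b, c} \<longrightarrow> r a \<otimes>\<^bsub>R\<^esub> r b \<otimes>\<^bsub>R\<^esub> r c = \<one>\<^bsub>R\<^esub>)"
proof -
  interpret gq22_representation P L R r
    using assms by unfold_locales
  have "order R = 2 ^ 4 \<longleftrightarrow> carrier R = insert \<one>\<^bsub>R\<^esub> (r ` P)"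
    using order_eq_16_iff by simp
  also have "\<dots> \<longleftrightarrow>
      (\<forall>a b c. complete_k_arc P L 3 {a, b, c} \<longrightarrow> r a \<otimes>\<^bsub>R\<^esub> r b \<otimes>\<^bsub>R\<^esub> r c = \<one>\<^bsub>R\<^esub>)"
    using complete_3_arc_r_mult carrier_eq_if_r_mult_closed r_mult_mem_if_complete_3_arcs by blast
  finally show ?thesis .
qed

end
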